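(* For any $\mathcal{H}, \mathcal{G} \in \mathcal{P}$, the following relationships between the model inclusion order and the twin order exist: (i) if $\mathcal{H} \preceq_{s} \mathcal{G}$ then $\mathcal{H} \preceq_{t} \mathcal{G}$; (ii) if $\mathcal{H} \preceq_{s} \mathcal{G}$ and $\mathcal{H}$ is covered by $\mathcal{G}$ in the twin order (i.e., $\mathcal{H} \prec_{t} \mathcal{G}$ and there is no $\mathcal{F}\in\mathcal{P}$ with $\mathcal{H} \prec_{t} \mathcal{F} \prec_{t} \mathcal{G}$), then $\mathcal{H}$ is covered by $\mathcal{G}$ in the model inclusion order (i.e., $\mathcal{H} \prec_{s} \mathcal{G}$ and there is no $\mathcal{F}\in\mathcal{P}$ with $\mathcal{H} \prec_{s} \mathcal{F} \prec_{s} \mathcal{G}$).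
   Context: Let $V=\{1,\dots,p\}$ and let $\tau$ be a twin-pairing function on $V$, i.e. $\tau(i)\in V$ with $\tau(\tau(i))=i$ and $\tau(i)\neq i$; it is extended to edges by $\tau(i,j)=(\tau(i),\tau(j))$ (endpoints reordered so the smaller comes first) and to sets elementwise. Fix a partition $(L,R)$ of $V$ with $\tau(L)=R$, numbered so that $L=\{1,\dots,q\}$, $R=\{q+1,\dots,p\}$. Let $F_V=\{(i,j): i,j\in V, i<j\}$, $F_L=\{(i,j)\in F_V: i<\tau(j)\}$, $F_R=\{(i,j)\in F_V: i>\tau(j)\}$. A coloured graph $\mathcal G=(\mathcal V,\mathcal E)$ consists of a partition $\mathcal V$ of $V$ into vertex colour classes and a partition $\mathcal E$ of an edge set $E\subseteq F_V$ into edge colour classes. It is a coloured graph for paired data (pdCG) if every colour class is either atomic (a single element) or twin-pairing (of the form $\{i,\tau(i)\}$ or $\{(i,j),\tau(i,j)\}$ with $(i,j)\neq\tau(i,j)$). The associated RCON model for paired data $\mathcal{P}(\mathcal G)$ is the family of Gaussian distributions whose concentration matrix has zero entries for missing edges and equal entries for vertices (diagonal entries) or edges (off-diagonal entries) in the same colour class; $\mathcal{P}$ denotes the family of all pdCGs on $V$ (equivalently, of these models). Every pdCG is equivalently represented by the quadruplet $(V,E,\mathbb L,\mathbb E)$ where $E$ is the union of the edge colour classes, $E_L=E\cap F_L$, $E_R=E\cap F_R$, $\mathbb L=\{i\in L:\{i\}\in\mathcal V\}$ and $\mathbb E=\{(i,j)\in E_L\cap\tau(E_R): \{(i,j)\}\in\mathcal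 E\}$. The model inclusion order is $\mathcal H\preceq_s\mathcal G$ iff $\mathcal P(\mathcal H)\subseteq\mathcal P(\mathcal G)$, which holds iff the edge set of $\mathcal H$ is contained in that of $\mathcal G$, every vertex colour class of $\mathcal H$ is a union of vertex colour classes of $\mathcal G$, and every edge colour class of $\mathcal H$ is a union of edge colour classes of $\mathcal G$. The twin order is $\mathcal H\preceq_t\mathcal G$ iff $E_{\mathcal H}\subseteq E_{\mathcal G}$, $\mathbb L_{\mathcal H}\subseteq\mathbb L_{\mathcal G}$ and $\mathbb E_{\mathcal H}\subseteq\mathbb E_{\mathcal G}$. Strict versions are denoted $\prec_s$, $\prec_t$. *)

theory Defs
  imports Complex_Main
begin

type_synonym edge = "nat \<times> nat"
type_synonym cgraph = "nat set set \<times> edge set set"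
  (* (vertex colour classes, edge colour classes) *)

definition Vset :: "nat \<Rightarrow> nat set" where
  "Vset p = {1..p}"

definition twin_pairing :: "nat \<Rightarrow> (nat \<Rightarrow> nat) \<Rightarrow> bool" where
  "twin_pairing p \<tau> \<longleftrightarrow> (\<forall>i\<in>Vset p. \<tau> i \<in> Vset p \<and> \<tau> (\<tau> i) = i \<and> \<tau> i \<noteq> i)"

definition tau_e :: "(nat \<Rightarrow> nat) \<Rightarrow> edge \<Rightarrow> edge" where
  "tau_e \<tau> e = (min (\<tau> (fst e)) (\<tau> (snd e)), max (\<tau> (fst e)) (\<tau> (snd e)))"

definition F_V :: "nat \<Rightarrow> edge set" where
  "F_V p = {(i,j). i \<in> Vset p \<and> j \<in> Vset p \<and> i < j}"

definition F_L :: "nat \<Rightarrow> (nat \<Rightarrow> nat) \<Rightarrow> edge set" where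
  "F_L p \<tau> = {(i,j) \<in> F_V p. i < \<tau> j}"

definition F_R :: "nat \<Rightarrow> (nat \<Rightarrow> nat) \<Rightarrow> edge set" where
  "F_R p \<tau> = {(i,j) \<in> F_V p. i > \<tau> j}"

definition is_partition_of :: "'a set set \<Rightarrow> 'a set \<Rightarrow> bool" where
  "is_partition_of P A \<longleftrightarrow> \<Union>P = A \<and> {} \<notin> P \<and>
     (\<forall>C\<in>P. \<forall>D\<in>P. C \<noteq> D \<longrightarrow> C \<inter> D = {})"

definition edges :: "cgraph \<Rightarrow> edge set" where
  "edges G = \<Union>(snd G)"

definition pdCG :: "nat \<Rightarrow> (nat \<Rightarrow> nat) \<Rightarrow> cgraph \<Rightarrow> bool" where
  "pdCG p \<tau> G \<longleftrightarrow>
     is_partition_of (fst G) (Vset p) \<and>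
     edges G \<subseteq> F_V p \<and> is_partition_of (snd G) (edges G) \<and>
     (\<forall>C\<in>fst G. (\<exists>i. C = {i}) \<or> (\<exists>i. C = {i, \<tau> i})) \<and>
     (\<forall>C\<in>snd G. (\<exists>e. C = {e}) \<or> (\<exists>e. C = {e, tau_e \<tau> e} \<and> e \<noteq> tau_e \<tau> e))"

(* concentration matrices (indexed by V, zero outside V) of the RCON model *)
definition RCON :: "nat \<Rightarrow> cgraph \<Rightarrow> (nat \<Rightarrow> nat \<Rightarrow> real) set" where
  "RCON p G = {K.
     (\<forall>i j. K i j = K j i) \<and>
     (\<forall>i j. i \<notin> Vset p \<or> j \<notin> Vset p \<longrightarrow> K i j = 0) \<and>
     (\<forall>x. (\<exists>i\<in>Vset p. x i \<noteq> 0) \<longrightarrow>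
          (\<Sum>i\<in>Vset p. \<Sum>j\<in>Vset p. x i * K i j * x j) > 0) \<and>
     (\<forall>(i,j)\<in>F_V p. (i,j) \<notin> edges G \<longrightarrow> K i j = 0) \<and>
     (\<forall>C\<in>fst G. \<forall>i\<in>C. \<forall>j\<in>C. K i i = K j j) \<and>
     (\<forall>C\<in>snd G. \<forall>e\<in>C. \<forall>f\<in>C. K (fst e) (snd e) = K (fst f) (snd f))}"

definition model_le :: "nat \<Rightarrow> cgraph \<Rightarrow> cgraph \<Rightarrow> bool" where
  "model_le p H G \<longleftrightarrow> RCON p H \<subseteq> RCON p G"

definition model_less :: "nat \<Rightarrow> cgraph \<Rightarrow> cgraph \<Rightarrow> bool" where
  "model_less p H G \<longleftrightarrow> model_le p H G \<and> H \<noteq> G"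

definition LL :: "nat \<Rightarrow> cgraph \<Rightarrow> nat set" where
  "LL q G = {i \<in> {1..q}. {i} \<in> fst G}"

definition EE :: "nat \<Rightarrow> (nat \<Rightarrow> nat) \<Rightarrow> cgraph \<Rightarrow> edge set" where
  "EE p \<tau> G = {e \<in> (edges G \<inter> F_L p \<tau>) \<inter> tau_e \<tau> ` (edges G \<inter> F_R p \<tau>). {e} \<in> snd G}"

definition twin_le :: "nat \<Rightarrow> nat \<Rightarrow> (nat \<Rightarrow> nat) \<Rightarrow> cgraph \<Rightarrow> cgraph \<Rightarrow> bool" where
  "twin_le p q \<tau> H G \<longleftrightarrow> edges H \<subseteq> edges G \<and> LL q H \<subseteq> LL q G \<and> EE p \<tau> H \<subseteq> EE p \<tau> G"

definition twin_less :: "nat \<Rightarrow> nat \<Rightarrow> (nat \<Rightarrow> nat) \<Rightarrow> cgraph \<Rightarrow> cgraph \<Rightarrow> bool" where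
  "twin_less p q \<tau> H G \<longleftrightarrow> twin_le p q \<tau> H G \<and> H \<noteq> G"

end

theory Submission
  imports Defs
begin

text \<open>
  For every colour class \<open>C\<close> of \<open>H\<close> there is a positive definite matrix in the RCON model of
  \<open>H\<close> that separates \<open>C\<close> from the rest: a diagonal matrix with \<open>2\<close> on a vertex class and \<open>1\<close>
  elsewhere, or the identity plus a small constant on an edge class and its transpose (small
  enough for diagonal dominance). If this matrix also lies in the model of \<open>G\<close>, it is constant on
  the classes of \<open>G\<close>, so every class of \<open>G\<close> that meets \<open>C\<close> lies inside \<open>C\<close>, and every edge of \<open>H\<close>
  is an edge of \<open>G\<close>. Hence atomic classes of \<open>H\<close> stay atomic in \<open>G\<close>, which gives (i). Part (ii)
  is order theory: as model inclusion implies the twin order, a model strictly between \<open>H\<close> and \<open>G\<close>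
  for inclusion is strictly between them in the twin order as well. Neither the twin pairing nor
  the partition \<open>(L, R)\<close> plays a role in the argument.
\<close>

lemma partition_class_subset: "is_partition_of P A \<Longrightarrow> C \<in> P \<Longrightarrow> C \<subseteq> A"
  unfolding is_partition_of_def by blast

lemma partition_class_unique:
  "is_partition_of P A \<Longrightarrow> C \<in> P \<Longrightarrow> D \<in> P \<Longrightarrow> x \<in> C \<Longrightarrow> x \<in> D \<Longrightarrow> C = D"
  unfolding is_partition_of_def by blast

lemma partition_covers: "is_partition_of P A \<Longrightarrow> x \<in> A \<Longrightarrow> \<exists>C\<in>P. x \<in> C"
  unfolding is_partition_of_def by blast

lemma pdCG_partitions:
  assumes "pdCG p \<tau> G"
  shows "is_partition_of (fst G) (Vset p)" and "is_partition_of (snd G) (edges G)"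
    and "edges G \<subseteq> F_V p"
  using assms by (simp_all add: pdCG_def)

lemma pdCG_edge_class_subset: "pdCG p \<tau> G \<Longrightarrow> C \<in> snd G \<Longrightarrow> C \<subseteq> F_V p"
  using pdCG_partitions(3) unfolding edges_def by blast

lemma pdCG_edge_class_finite: "pdCG p \<tau> G \<Longrightarrow> C \<in> snd G \<Longrightarrow> finite C"
  unfolding pdCG_def by fastforce

definition pattern_matrix ::
    "nat \<Rightarrow> (nat \<Rightarrow> real) \<Rightarrow> real \<Rightarrow> edge set \<Rightarrow> nat \<Rightarrow> nat \<Rightarrow> real" where
  "pattern_matrix p d c P = (\<lambda>k l. if k \<in> Vset p \<and> l \<in> Vset p then
      (if k = l then d k else if (k, l) \<in> P then c else 0) else 0)"

lemma abs_mult_le_sum_squares: "\<bar>a * b\<bar> \<le> a\<^sup>2 + (b::real)\<^sup>2"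
proof -
  have "0 \<le> (\<bar>a\<bar> - \<bar>b\<bar>)\<^sup>2" by simp
  then have "2 * \<bar>a * b\<bar> \<le> a\<^sup>2 + b\<^sup>2"
    by (simp add: power2_eq_square algebra_simps abs_mult)
  then show ?thesis by simp
qed

lemma pattern_matrix_quadratic_form_pos:
  fixes x d :: "nat \<Rightarrow> real" and c :: real
  assumes x: "\<exists>i\<in>Vset p. x i \<noteq> 0" and d: "\<forall>k\<in>Vset p. 1 \<le> d k"
    and P: "finite P" "\<bar>c\<bar> * card P < 1"
  shows "(\<Sum>i\<in>Vset p. \<Sum>j\<in>Vset p. x i * pattern_matrix p d c P i j * x j) > 0"
proof -
  let ?V = "Vset p"
  define S where "S = (\<Sum>i\<in>?V. (x i)\<^sup>2)"
  define off where "off i j = (if i \<noteq> j \<and> (i, j) \<in> P then x i * x j else 0)" for i j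
  have fin: "finite ?V" by (simp add: Vset_def)
  have S_pos: "S > 0"
    unfolding S_def using x fin by (auto intro: sum_pos2)
  have "(\<Sum>i\<in>?V. \<Sum>j\<in>?V. x i * pattern_matrix p d c P i j * x j)
      = (\<Sum>i\<in>?V. \<Sum>j\<in>?V. (if i = j then d i * (x i)\<^sup>2 else 0) + c * off i j)"
    by (intro sum.cong) (auto simp: pattern_matrix_def off_def power2_eq_square)
  also have "\<dots> = (\<Sum>i\<in>?V. d i * (x i)\<^sup>2) + c * (\<Sum>i\<in>?V. \<Sum>j\<in>?V. off i j)"
    using fin by (simp add: sum.distrib sum_distrib_left)
  finally have split: "(\<Sum>i\<in>?V. \<Sum>j\<in>?V. x i * pattern_matrix p d c P i j * x j)
      = (\<Sum>i\<in>?V. d i * (x i)\<^sup>2) + c * (\<Sum>i\<in>?V. \<Sum>j\<in>?V. off i j)" .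
  have diag: "S \<le> (\<Sum>i\<in>?V. d i * (x i)\<^sup>2)"
    unfolding S_def using d by (intro sum_mono) (metis mult_1 mult_right_mono zero_le_power2)
  have off_le: "\<bar>off i j\<bar> \<le> (if (i, j) \<in> P then S else 0)" if "i \<in> ?V" "j \<in> ?V" for i j
  proof (cases "i \<noteq> j \<and> (i, j) \<in> P")
    case True
    have "(x i)\<^sup>2 + (x j)\<^sup>2 = (\<Sum>k\<in>{i, j}. (x k)\<^sup>2)" using True by simp
    also have "\<dots> \<le> S"
      unfolding S_def using that fin by (intro sum_mono2) auto
    finally show ?thesis using True abs_mult_le_sum_squares[of "x i" "x j"] by (simp add: off_def)
  qed (use S_pos in \<open>auto simp: off_def\<close>)
  have "\<bar>\<Sum>i\<in>?V. \<Sum>j\<in>?V. off i j\<bar> \<le> (\<Sum>i\<in>?V. \<Sum>j\<in>?V. \<bar>off i j\<bar>)"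
    by (rule order_trans[OF sum_abs sum_mono]) (rule sum_abs)
  also have "\<dots> \<le> (\<Sum>i\<in>?V. \<Sum>j\<in>?V. if (i, j) \<in> P then S else 0)"
    by (intro sum_mono off_le)
  also have "\<dots> = (\<Sum>ij\<in>?V \<times> ?V. if ij \<in> P then S else 0)"
    unfolding sum.cartesian_product by (simp add: case_prod_unfold)
  also have "\<dots> = S * card (?V \<times> ?V \<inter> P)"
    using fin by (simp add: sum.If_cases)
  also have "\<dots> \<le> S * card P"
    using S_pos P(1) by (simp add: card_mono)
  finally have "\<bar>\<Sum>i\<in>?V. \<Sum>j\<in>?V. off i j\<bar> \<le> S * card P" .
  then have "\<bar>c * (\<Sum>i\<in>?V. \<Sum>j\<in>?V. off i j)\<bar> \<le> \<bar>c\<bar> * (S * card P)"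
    by (simp add: abs_mult mult_left_mono)
  moreover have "\<bar>c\<bar> * (S * card P) < S"
    using P(2) S_pos by (simp add: mult.left_commute)
  ultimately show ?thesis
    using split diag by linarith
qed

lemma pattern_matrix_sym: "sym P \<Longrightarrow> pattern_matrix p d c P i j = pattern_matrix p d c P j i"
  by (auto simp: pattern_matrix_def dest: symD)

lemma pattern_matrix_edge_entry:
  "e \<in> F_V p \<Longrightarrow> pattern_matrix p d c P (fst e) (snd e) = (if e \<in> P then c else 0)"
  by (auto simp: pattern_matrix_def F_V_def)

lemma pattern_matrix_in_RCON:
  fixes d :: "nat \<Rightarrow> real" and c :: real
  assumes G: "pdCG p \<tau> G"
    and d: "\<forall>k\<in>Vset p. 1 \<le> d k" "\<forall>C\<in>fst G. \<forall>i\<in>C. \<forall>j\<in>C. d i = d j"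
    and P: "finite P" "sym P" "\<bar>c\<bar> * card P < 1" "P \<inter> F_V p \<subseteq> edges G"
      "\<forall>C\<in>snd G. \<forall>e\<in>C. \<forall>f\<in>C. e \<in> P \<longleftrightarrow> f \<in> P"
  shows "pattern_matrix p d c P \<in> RCON p G"
  unfolding RCON_def mem_Collect_eq
proof (intro conjI allI impI ballI)
  let ?K = "pattern_matrix p d c P"
  show "?K i j = ?K j i" for i j
    using pattern_matrix_sym[OF P(2)] .
  show "?K i j = 0" if "i \<notin> Vset p \<or> j \<notin> Vset p" for i j
    using that by (auto simp: pattern_matrix_def)
  show "(\<Sum>i\<in>Vset p. \<Sum>j\<in>Vset p. x i * ?K i j * x j) > 0"
    if "\<exists>i\<in>Vset p. x i \<noteq> 0" for x
    using pattern_matrix_quadratic_form_pos[OF that d(1) P(1,3)] .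
  show "case e of (i, j) \<Rightarrow> (i, j) \<notin> edges G \<longrightarrow> ?K i j = 0" if "e \<in> F_V p" for e
  proof (cases e)
    case (Pair i j)
    have "?K i j = (if (i, j) \<in> P then c else 0)"
      using pattern_matrix_edge_entry[OF that] Pair by simp
    moreover have "(i, j) \<in> edges G" if "(i, j) \<in> P"
      using P(4) \<open>e \<in> F_V p\<close> Pair that by blast
    ultimately show ?thesis using Pair by auto
  qed
  show "?K i i = ?K j j" if "C \<in> fst G" "i \<in> C" "j \<in> C" for C i j
  proof -
    have "i \<in> Vset p" "j \<in> Vset p"
      using partition_class_subset[OF pdCG_partitions(1)[OF G] that(1)] that(2,3) by auto
    moreover have "d i = d j" using d(2) that by blast
    ultimately show ?thesis by (simp add: pattern_matrix_def)
  qed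
  show "?K (fst e) (snd e) = ?K (fst f) (snd f)" if "C \<in> snd G" "e \<in> C" "f \<in> C" for C e f
  proof -
    have "e \<in> F_V p" "f \<in> F_V p" using pdCG_edge_class_subset[OF G that(1)] that(2,3) by auto
    moreover have "e \<in> P \<longleftrightarrow> f \<in> P" using P(5) that by blast
    ultimately show ?thesis by (simp add: pattern_matrix_edge_entry)
  qed
qed

definition vertex_class_witness :: "nat \<Rightarrow> nat set \<Rightarrow> nat \<Rightarrow> nat \<Rightarrow> real" where
  "vertex_class_witness p C = pattern_matrix p (\<lambda>k. if k \<in> C then 2 else 1) 0 {}"

definition edge_class_witness :: "nat \<Rightarrow> edge set \<Rightarrow> nat \<Rightarrow> nat \<Rightarrow> real" where
  "edge_class_witness p C = pattern_matrix p (\<lambda>_. 1) (1 / (card (C \<union> C\<inverse>) + 1)) (C \<union> C\<inverse>)"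

lemma vertex_class_witness_diag:
  "i \<in> Vset p \<Longrightarrow> vertex_class_witness p C i i = (if i \<in> C then 2 else 1)"
  by (simp add: vertex_class_witness_def pattern_matrix_def)

lemma F_V_notin_converse: "e \<in> F_V p \<Longrightarrow> C \<subseteq> F_V p \<Longrightarrow> e \<notin> C\<inverse>"
  by (auto simp: F_V_def)

lemma edge_class_witness_eq_0_iff:
  assumes "e \<in> F_V p" "C \<subseteq> F_V p"
  shows "edge_class_witness p C (fst e) (snd e) = 0 \<longleftrightarrow> e \<notin> C"
  using F_V_notin_converse[OF assms]
  by (simp add: edge_class_witness_def pattern_matrix_edge_entry[OF assms(1)] add_pos_pos)

lemma vertex_class_witness_in_RCON:
  assumes H: "pdCG p \<tau> H" and C: "C \<in> fst H"
  shows "vertex_class_witness p C \<in> RCON p H"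
  unfolding vertex_class_witness_def
proof (rule pattern_matrix_in_RCON[OF H])
  show "\<forall>D\<in>fst H. \<forall>i\<in>D. \<forall>j\<in>D. (if i \<in> C then 2 else 1) = (if j \<in> C then 2 else (1::real))"
    using partition_class_unique[OF pdCG_partitions(1)[OF H] C] by auto
qed (simp_all add: sym_def)

lemma edge_class_witness_in_RCON:
  assumes H: "pdCG p \<tau> H" and C: "C \<in> snd H"
  shows "edge_class_witness p C \<in> RCON p H"
  unfolding edge_class_witness_def
proof (rule pattern_matrix_in_RCON[OF H])
  have CF: "C \<subseteq> F_V p" using pdCG_edge_class_subset[OF H C] .
  show "finite (C \<union> C\<inverse>)" using pdCG_edge_class_finite[OF H C] by simp
  show "\<bar>1 / (card (C \<union> C\<inverse>) + 1)\<bar> * card (C \<union> C\<inverse>) < (1::real)"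
    by simp
  show "(C \<union> C\<inverse>) \<inter> F_V p \<subseteq> edges H"
    using C CF by (auto simp: edges_def F_V_def)
  have in_C_iff: "e \<in> C \<union> C\<inverse> \<longleftrightarrow> D = C" if "D \<in> snd H" "e \<in> D" for D e
  proof -
    have "e \<in> F_V p" using pdCG_edge_class_subset[OF H that(1)] that(2) by blast
    then have "e \<notin> C\<inverse>" using F_V_notin_converse CF by blast
    then show ?thesis
      using partition_class_unique[OF pdCG_partitions(2)[OF H] C that(1) _ that(2)] that by auto
  qed
  show "\<forall>D\<in>snd H. \<forall>e\<in>D. \<forall>f\<in>D. e \<in> C \<union> C\<inverse> \<longleftrightarrow> f \<in> C \<union> C\<inverse>"
    using in_C_iff by (metis (no_types))
qed (simp_all add: sym_Un_converse)

lemma RCON_non_edge: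
  assumes "K \<in> RCON p G" "e \<in> F_V p" "e \<notin> edges G"
  shows "K (fst e) (snd e) = 0"
proof -
  have "\<forall>(i, j)\<in>F_V p. (i, j) \<notin> edges G \<longrightarrow> K i j = 0"
    using assms(1) unfolding RCON_def mem_Collect_eq by (elim conjE) assumption
  then have "case e of (i, j) \<Rightarrow> (i, j) \<notin> edges G \<longrightarrow> K i j = 0"
    using assms(2) by (rule bspec)
  with assms(3) show ?thesis by (simp add: case_prod_beta)
qed

lemma RCON_vertex_class_eq:
  assumes "K \<in> RCON p G" "C \<in> fst G" "i \<in> C" "j \<in> C"
  shows "K i i = K j j"
proof -
  have "\<forall>C\<in>fst G. \<forall>i\<in>C. \<forall>j\<in>C. K i i = K j j"
    using assms(1) unfolding RCON_def mem_Collect_eq by (elim conjE) assumption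
  then show ?thesis using assms(2-4) by blast
qed

lemma RCON_edge_class_eq:
  assumes "K \<in> RCON p G" "C \<in> snd G" "e \<in> C" "f \<in> C"
  shows "K (fst e) (snd e) = K (fst f) (snd f)"
proof -
  have "\<forall>C\<in>snd G. \<forall>e\<in>C. \<forall>f\<in>C. K (fst e) (snd e) = K (fst f) (snd f)"
    using assms(1) unfolding RCON_def mem_Collect_eq by (elim conjE) assumption
  then show ?thesis using assms(2-4) by blast
qed

lemma model_le_refines_vertex_classes:
  assumes le: "model_le p H G" and H: "pdCG p \<tau> H" and G: "pdCG p \<tau> G"
    and C: "C \<in> fst H" and D: "D \<in> fst G" and i: "i \<in> C" "i \<in> D"
  shows "D \<subseteq> C"
proof
  fix j assume j: "j \<in> D"
  have "vertex_class_witness p C \<in> RCON p G"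
    using vertex_class_witness_in_RCON[OF H C] le by (auto simp: model_le_def)
  then have "vertex_class_witness p C j j = vertex_class_witness p C i i"
    using RCON_vertex_class_eq D i(2) j by metis
  moreover have "i \<in> Vset p" "j \<in> Vset p"
    using partition_class_subset[OF pdCG_partitions(1)[OF G] D] i(2) j by auto
  ultimately show "j \<in> C" using i(1) by (simp add: vertex_class_witness_diag split: if_splits)
qed

lemma model_le_refines_edge_classes:
  assumes le: "model_le p H G" and H: "pdCG p \<tau> H" and G: "pdCG p \<tau> G"
    and C: "C \<in> snd H" and D: "D \<in> snd G" and e: "e \<in> C" "e \<in> D"
  shows "D \<subseteq> C"
proof
  fix f assume f: "f \<in> D"
  have "edge_class_witness p C \<in> RCON p G"
    using edge_class_witness_in_RCON[OF H C] le by (auto simp: model_le_def)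
  then have "edge_class_witness p C (fst f) (snd f) = edge_class_witness p C (fst e) (snd e)"
    using RCON_edge_class_eq D e(2) f by metis
  moreover have "e \<in> F_V p" "f \<in> F_V p"
    using pdCG_edge_class_subset[OF G D] e(2) f by auto
  ultimately show "f \<in> C"
    using e(1) edge_class_witness_eq_0_iff[OF _ pdCG_edge_class_subset[OF H C]] by metis
qed

lemma model_le_edges_subset:
  assumes le: "model_le p H G" and H: "pdCG p \<tau> H"
  shows "edges H \<subseteq> edges G"
proof
  fix e assume "e \<in> edges H"
  then obtain C where C: "C \<in> snd H" "e \<in> C" unfolding edges_def by blast
  have "edge_class_witness p C \<in> RCON p G"
    using edge_class_witness_in_RCON[OF H C(1)] le by (auto simp: model_le_def)
  moreover have "e \<in> F_V p" using pdCG_edge_class_subset[OF H C(1)] C(2) by blast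
  moreover have "edge_class_witness p C (fst e) (snd e) \<noteq> 0"
    using edge_class_witness_eq_0_iff[OF \<open>e \<in> F_V p\<close> pdCG_edge_class_subset[OF H C(1)]] C(2)
    by blast
  ultimately show "e \<in> edges G" using RCON_non_edge by metis
qed

lemma EE_mono:
  assumes "edges H \<subseteq> edges G" and "\<And>e. {e} \<in> snd H \<Longrightarrow> {e} \<in> snd G"
  shows "EE p \<tau> H \<subseteq> EE p \<tau> G"
proof
  fix e assume "e \<in> EE p \<tau> H"
  then have "e \<in> edges H \<inter> F_L p \<tau>" "e \<in> tau_e \<tau> ` (edges H \<inter> F_R p \<tau>)" "{e} \<in> snd H"
    unfolding EE_def by simp_all
  then show "e \<in> EE p \<tau> G"
    unfolding EE_def using assms by blast
qed

lemma model_le_imp_twin_le: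
  assumes le: "model_le p H G" and H: "pdCG p \<tau> H" and G: "pdCG p \<tau> G"
  shows "twin_le p q \<tau> H G"
proof -
  have E: "edges H \<subseteq> edges G" using model_le_edges_subset[OF le H] .
  have "{i} \<in> fst G" if "{i} \<in> fst H" for i
  proof -
    have "i \<in> Vset p" using partition_class_subset[OF pdCG_partitions(1)[OF H] that] by blast
    then obtain D where D: "D \<in> fst G" "i \<in> D"
      using partition_covers[OF pdCG_partitions(1)[OF G]] by blast
    then have "D = {i}" using model_le_refines_vertex_classes[OF le H G that D(1)] by blast
    with D(1) show ?thesis by simp
  qed
  then have L: "LL q H \<subseteq> LL q G" unfolding LL_def by blast
  have "{e} \<in> snd G" if "{e} \<in> snd H" for e
  proof -
    have "e \<in> edges G" using E that unfolding edges_def by blast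
    then obtain D where D: "D \<in> snd G" "e \<in> D" unfolding edges_def by blast
    then have "D = {e}" using model_le_refines_edge_classes[OF le H G that D(1)] by blast
    with D(1) show ?thesis by simp
  qed
  then have "EE p \<tau> H \<subseteq> EE p \<tau> G" by (rule EE_mono[OF E])
  with E L show ?thesis by (simp add: twin_le_def)
qed

theorem proposition7:
  fixes p q :: nat and \<tau> :: "nat \<Rightarrow> nat" and H G :: cgraph
  assumes "twin_pairing p \<tau>"
    and "q \<le> p"
    and "\<tau> ` {1..q} = {q+1..p}"
    and "pdCG p \<tau> H" and "pdCG p \<tau> G"
  shows "(model_le p H G \<longrightarrow> twin_le p q \<tau> H G) \<and>
         (model_le p H G \<and> twin_less p q \<tau> H G \<and>
            \<not> (\<exists>F. pdCG p \<tau> F \<and> twin_less p q \<tau> H F \<and> twin_less p q \<tau> F G)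
          \<longrightarrow> model_less p H G \<and>
            \<not> (\<exists>F. pdCG p \<tau> F \<and> model_less p H F \<and> model_less p F G))"
proof (intro conjI impI)
  show "twin_le p q \<tau> H G" if "model_le p H G"
    using model_le_imp_twin_le[OF that assms(4,5)] .
next
  assume cover: "model_le p H G \<and> twin_less p q \<tau> H G \<and>
    \<not> (\<exists>F. pdCG p \<tau> F \<and> twin_less p q \<tau> H F \<and> twin_less p q \<tau> F G)"
  then show "model_less p H G" by (simp add: model_less_def twin_less_def)
  show "\<not> (\<exists>F. pdCG p \<tau> F \<and> model_less p H F \<and> model_less p F G)"
  proof
    assume "\<exists>F. pdCG p \<tau> F \<and> model_less p H F \<and> model_less p F G"
    then obtain F where F: "pdCG p \<tau> F" "model_less p H F" "model_less p F G" by blast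
    then have "twin_less p q \<tau> H F" "twin_less p q \<tau> F G"
      using model_le_imp_twin_le assms(4,5) by (auto simp: model_less_def twin_less_def)
    with F(1) cover show False by blast
  qed
qed

end
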